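(* The category $\mathbf{T_D Top}$ of $T_D$-spaces and continuous maps is a full coreflective subcategory of the category $\mathbf{Top_{LC}}$ of topological spaces and locally closed maps. For each space $X$, the coreflection is the inclusion $X_D\subseteq X$, where $X_D$ is the subspace of locally closed points of $X$: for every $T_D$-space $Y$ and locally closed map $f:Y\to X$ there is a unique locally closed (continuous) map $\widehat f:Y\to X_D$ whose composite with the inclusion is $f$.
   Context: A point $x$ of a space $X$ is locally closed if $\{x\}$ is closed in some open neighborhood of $x$. $X$ is a $T_D$-space if every point is locally closed. A continuous map is locally closed if it maps locally closed points to locally closed points (every continuous map between $T_D$-spaces is locally closed). *)

theory Defs
  imports "HOL-Analysis.Analysis"
begin

definition locally_closed_point :: "'a topology \<Rightarrow> 'a \<Rightarrow> bool" where
  "locally_closed_point X x \<longleftrightarrow> x \<in> topspace X \<and>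
     (\<exists>U. openin X U \<and> x \<in> U \<and> closedin (subtopology X U) {x})"

definition TD_space :: "'a topology \<Rightarrow> bool" where
  "TD_space X \<longleftrightarrow> (\<forall>x\<in>topspace X. locally_closed_point X x)"

definition locally_closed_map :: "'a topology \<Rightarrow> 'b topology \<Rightarrow> ('a \<Rightarrow> 'b) \<Rightarrow> bool" where
  "locally_closed_map X Y f \<longleftrightarrow> continuous_map X Y f \<and>
     (\<forall>x\<in>topspace X. locally_closed_point X x \<longrightarrow> locally_closed_point Y (f x))"

definition TD_part :: "'a topology \<Rightarrow> 'a topology" where
  "TD_part X = subtopology X {x \<in> topspace X. locally_closed_point X x}"

end

theory Submission
  imports Defs
begin

text \<open>A locally closed point stays locally closed in every subspace containing it, so X_D is a
  T_D-space. Only the codomain matters for a continuous map to be locally closed: into a T_D-space it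
  always is. A locally closed map out of a T_D-space lands in X_D, hence corestricts to X_D, and the
  corestriction is unique because the inclusion is injective.\<close>

lemma locally_closed_point_subtopology:
  assumes "locally_closed_point X x" and "x \<in> S"
  shows "locally_closed_point (subtopology X S) x"
proof -
  obtain U where U: "openin X U" "x \<in> U" "closedin (subtopology X U) {x}"
    using assms(1) by (auto simp: locally_closed_point_def)
  then obtain C where C: "closedin X C" "{x} = C \<inter> U"
    by (auto simp: closedin_subtopology)
  have "openin (subtopology X S) (S \<inter> U)"
    using U(1) by (auto simp: openin_subtopology)
  moreover have "closedin (subtopology (subtopology X S) (S \<inter> U)) {x}"
    unfolding subtopology_subtopology closedin_subtopology
    using C assms(2) by blast
  moreover have "x \<in> topspace (subtopology X S)"
    using assms by (simp add: locally_closed_point_def)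
  ultimately show ?thesis
    using assms(2) U(2) unfolding locally_closed_point_def by blast
qed

lemma topspace_TD_part:
  "topspace (TD_part X) = {x \<in> topspace X. locally_closed_point X x}"
  unfolding TD_part_def by auto

lemma TD_space_TD_part: "TD_space (TD_part X)"
  unfolding TD_space_def topspace_TD_part
  unfolding TD_part_def by (blast intro: locally_closed_point_subtopology)

lemma continuous_map_into_TD_space_imp_locally_closed_map:
  assumes "TD_space Y" and "continuous_map X Y f"
  shows "locally_closed_map X Y f"
  using assms continuous_map_funspace
  unfolding locally_closed_map_def TD_space_def by blast

lemma locally_closed_map_TD_part_inclusion: "locally_closed_map (TD_part X) X id"
  unfolding locally_closed_map_def topspace_TD_part
  by (simp add: TD_part_def continuous_map_from_subtopology)

lemma locally_closed_map_from_TD_space_image: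
  assumes "TD_space Y" and "locally_closed_map Y X f"
  shows "f ` topspace Y \<subseteq> topspace (TD_part X)"
  using assms unfolding topspace_TD_part locally_closed_map_def TD_space_def
  by (auto simp: locally_closed_point_def)

lemma locally_closed_map_into_TD_part:
  assumes "TD_space Y" and "locally_closed_map Y X f"
  shows "locally_closed_map Y (TD_part X) f"
proof -
  have "continuous_map Y (TD_part X) f"
    using assms(2) locally_closed_map_from_TD_space_image[OF assms]
    unfolding locally_closed_map_def topspace_TD_part
    by (auto simp: TD_part_def continuous_map_in_subtopology)
  then show ?thesis
    by (rule continuous_map_into_TD_space_imp_locally_closed_map[OF TD_space_TD_part])
qed

theorem theorem5p21:
  fixes X :: "'a topology"
  shows
    \<comment> \<open>fullness: every continuous map between T_D-spaces is locally closed\<close>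
    "(\<forall>(A :: 'b topology) (B :: 'c topology) g.
        TD_space A \<and> TD_space B \<and> continuous_map A B g \<longrightarrow> locally_closed_map A B g)
     \<and> TD_space (TD_part X)
     \<and> locally_closed_map (TD_part X) X id
     \<and> (\<forall>(Y :: 'b topology) f. TD_space Y \<and> locally_closed_map Y X f \<longrightarrow>
          (\<exists>fh. locally_closed_map Y (TD_part X) fh \<and> (\<forall>y\<in>topspace Y. id (fh y) = f y)
             \<and> (\<forall>h. locally_closed_map Y (TD_part X) h \<and> (\<forall>y\<in>topspace Y. id (h y) = f y)
                   \<longrightarrow> (\<forall>y\<in>topspace Y. h y = fh y))))"
proof (intro conjI allI impI)
  fix Y :: "'b topology" and f
  assume "TD_space Y \<and> locally_closed_map Y X f"
  then have "locally_closed_map Y (TD_part X) f"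
    by (blast intro: locally_closed_map_into_TD_part)
  then show "\<exists>fh. locally_closed_map Y (TD_part X) fh \<and> (\<forall>y\<in>topspace Y. id (fh y) = f y)
             \<and> (\<forall>h. locally_closed_map Y (TD_part X) h \<and> (\<forall>y\<in>topspace Y. id (h y) = f y)
                   \<longrightarrow> (\<forall>y\<in>topspace Y. h y = fh y))"
    by auto
qed (auto intro: continuous_map_into_TD_space_imp_locally_closed_map
       TD_space_TD_part locally_closed_map_TD_part_inclusion)

end
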